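(* Let $n\ge 2$ and assume the standing assumptions in the context hold. Let $(\nu,\mu)\in\mathbb{S}^2$ with $\nu\ne\mu$ be such that $\mathcal N_{\nu,\mu}$ is nonempty and $\operatorname{rank}(\Psi_{\nu,\mu})=n$. Then $$T_\mu^{-1}T_\nu=\hat{\mathcal O}_\mu^\dagger\,\mathcal Z_{\nu,\mu}\,\Psi_{\nu,\mu}^\dagger.$$ Here $\hat{\mathcal O}_\mu^\dagger=(\hat{\mathcal O}_\mu^T\hat{\mathcal O}_\mu)^{-1}\hat{\mathcal O}_\mu^T$ and $\Psi_{\nu,\mu}^\dagger=\Psi_{\nu,\mu}^T(\Psi_{\nu,\mu}\Psi_{\nu,\mu}^T)^{-1}$. In particular, $T_\mu^{-1}T_\nu$ is uniquely determined by the data $(u,\varphi,y)$ and the estimates $\hat{\mathcal P}$.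
   Context: **System data.** Consider the LSS $$x(k+1)=A_{\varphi(k)}x(k)+B_{\varphi(k)}u(k),\qquad y(k)=C_{\varphi(k)}x(k)+D_{\varphi(k)}u(k),$$ with $u(k)\in\mathbb{R}^m$, $y(k)\in\mathbb{R}^p$, $x(k)\in\mathbb{R}^n$. The switching sequence $\varphi:[1,N]\to\mathbb{S}=\{1,\dots,\sigma\}$ is surjective, and the discrete states are $\mathcal P_j=(A_j,B_j,C_j,D_j)$. **Switching times and dwell times.** Write $k_0=1<k_1<\dots<k_{i^*}<k_{i^*+1}=N$, where $\varphi$ is constant on each $[k_i,k_{i+1})$ and changes value at each $k_i$, $1\le i\le i^*$. Set $\delta_i=k_{i+1}-k_i$ and $\delta_*=\min_{0\le i\le i^*}\delta_i$. **Standing assumptions.** - Each $\mathcal P_j$ is minimal of McMillan degree $n$, has invertible $A_j$, and is BIBO stable. - $\delta_*\ge n$. - Local estimates $\hat{\mathcal P}_j=(\hat A_j,\hat B_j,\hat C_j,\hat D_j)$ are given, one per mode $j$. For some unknown nonsingular $T_j$ they satisfy $$\hat A_j=T_j^{-1}A_jT_j,\quad \hat B_j=T_j^{-1}B_j,\quad \hat C_j=C_jT_j,\quad \hat D_j=D_j.$$ **Constructions.** Let $q=\delta_*-1$. For a mode $j$, let $$\hat{\mathcal O}_j=[\hat C_j^T\ (\hat C_j\hat A_j)^T\cdots(\hat C_j\hat A_j^{q})^T]^T,$$ and let $\hat\Gamma_j$ be the block lower-triangular Toeplitz matrix with diagonal blocks $\hat D_j$ and $(r,s)$ block $\hat C_j\hat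 A_j^{r-s-1}\hat B_j$ for $r>s$ (block size $(q+1)\times(q+1)$). For $1\le i\le i^*$, write $\nu=\varphi(k_{i-1})$ and $\mu=\varphi(k_i)$. Define the following quantities. - The state estimate $$\hat x(k_{i-1})=\hat{\mathcal O}_\nu^\dagger\,(Y_{i-1}-\hat\Gamma_\nu U_{i-1}),$$ where $Y_{i-1}=[y(k_{i-1})^T\cdots y(k_{i-1}+q)^T]^T$ and $U_{i-1}$ is defined analogously from $u$. - The vector $$\kappa_{i-1}=\hat A_\nu^{k_i-k_{i-1}}\hat x(k_{i-1})+\sum_{l=k_{i-1}}^{k_i-1}\hat A_\nu^{k_i-l-1}\hat B_\nu u(l).$$ - For $k\in[k_i,k_{i+1})$, the corrected output $$\zeta_i(k)=y(k)-\hat D_\mu u(k)-\sum_{l=k_i}^{k-1}\hat C_\mu\hat A_\mu^{k-l-1}\hat B_\mu u(l),$$ where the sum is empty if $k=k_i$. - The stacked vector $Z_i=[\zeta_i(k_i)^T\cdots\zeta_i(k_i+q)^T]^T$. For $\nu\ne\mu$, let $\mathcal N_{\nu,\mu}=\{i\in[1,i^*]:\varphi(k_{i-1})=\nu,\ \varphi(k_i)=\mu\}$. Let $\Psi_{\nu,\mu}$ be the matrix whose columns are the vectors $\kappa_{i-1}$, and let $\mathcal Z_{\nu,\mu}$ be the matrix whose columns are the vectors $Z_i$, in both cases for $i\in\mathcal N_{\nu,\mu}$ taken in increasing order. *)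

theory Defs
  imports "Jordan_Normal_Form.DL_Rank"
begin

definition mrank :: "real mat \<Rightarrow> nat" where
  "mrank M = vec_space.rank (dim_row M) M"

text \<open>Inverse of an invertible square matrix (unspecified otherwise).\<close>
definition minv :: "real mat \<Rightarrow> real mat" where
  "minv M = (SOME B. B \<in> carrier_mat (dim_row M) (dim_row M) \<and> inverts_mat M B \<and> inverts_mat B M)"

definition pinv_left :: "real mat \<Rightarrow> real mat" where
  "pinv_left M = minv (transpose_mat M * M) * transpose_mat M"

definition pinv_right :: "real mat \<Rightarrow> real mat" where
  "pinv_right M = transpose_mat M * minv (M * transpose_mat M)"

text \<open>Controllability matrix [B AB ... A^(n-1)B] and observability matrix
  [C; CA; ...; CA^(n-1)], n = dim_row A.\<close>
definition ctrb_mat :: "real mat \<Rightarrow> real mat \<Rightarrow> real mat" where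
  "ctrb_mat A B = mat (dim_row A) (dim_row A * dim_col B)
     (\<lambda>(r,c). (A ^\<^sub>m (c div dim_col B) * B) $$ (r, c mod dim_col B))"

definition obsv_mat :: "real mat \<Rightarrow> real mat \<Rightarrow> real mat" where
  "obsv_mat A C = mat (dim_row A * dim_row C) (dim_row A)
     (\<lambda>(r,c). (C * A ^\<^sub>m (r div dim_row C)) $$ (r mod dim_row C, c))"

definition minimal_deg :: "nat \<Rightarrow> nat \<Rightarrow> nat \<Rightarrow> real mat \<Rightarrow> real mat \<Rightarrow> real mat \<Rightarrow> real mat \<Rightarrow> bool" where
  "minimal_deg n m p A B C D \<longleftrightarrow>
     A \<in> carrier_mat n n \<and> B \<in> carrier_mat n m \<and> C \<in> carrier_mat p n \<and> D \<in> carrier_mat p m \<and>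
     mrank (ctrb_mat A B) = n \<and> mrank (obsv_mat A C) = n"

definition zs_output :: "real mat \<Rightarrow> real mat \<Rightarrow> real mat \<Rightarrow> real mat \<Rightarrow> (nat \<Rightarrow> real vec) \<Rightarrow> nat \<Rightarrow> real vec" where
  "zs_output A B C D u k = D *\<^sub>v u k +
     vec (dim_row C) (\<lambda>c. \<Sum>l<k. (C * A ^\<^sub>m (k - l - 1) * B *\<^sub>v u l) $ c)"

definition bibo_stable :: "real mat \<Rightarrow> real mat \<Rightarrow> real mat \<Rightarrow> real mat \<Rightarrow> bool" where
  "bibo_stable A B C D \<longleftrightarrow>
     (\<forall>u. (\<forall>k. u k \<in> carrier_vec (dim_col B)) \<longrightarrow>
          (\<exists>M. \<forall>k i. i < dim_col B \<longrightarrow> \<bar>u k $ i\<bar> \<le> M) \<longrightarrow>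
          (\<exists>M. \<forall>k i. i < dim_row C \<longrightarrow> \<bar>zs_output A B C D u k $ i\<bar> \<le> M))"

definition dwell_min :: "(nat \<Rightarrow> nat) \<Rightarrow> nat \<Rightarrow> nat" where
  "dwell_min ks istar = Min ((\<lambda>i. ks (Suc i) - ks i) ` {0..istar})"

text \<open>Extended observability matrix [C; CA; ...; CA^q] (block rows 0..q).\<close>
definition ext_obs :: "nat \<Rightarrow> real mat \<Rightarrow> real mat \<Rightarrow> real mat" where
  "ext_obs q A C = mat ((q+1) * dim_row C) (dim_col C)
     (\<lambda>(r,c). (C * A ^\<^sub>m (r div dim_row C)) $$ (r mod dim_row C, c))"

text \<open>Block lower-triangular Toeplitz matrix with (q+1)x(q+1) blocks: diagonal D,
  block (r,s) = C A^(r-s-1) B for r > s, zero above the diagonal.\<close>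
definition toeplitz_blk :: "nat \<Rightarrow> real mat \<Rightarrow> real mat \<Rightarrow> real mat \<Rightarrow> real mat \<Rightarrow> real mat" where
  "toeplitz_blk q A B C D = mat ((q+1) * dim_row D) ((q+1) * dim_col D)
     (\<lambda>(r,c). (let a = r div dim_row D; b = c div dim_col D in
        (if a = b then D else if b < a then C * A ^\<^sub>m (a - b - 1) * B
         else 0\<^sub>m (dim_row D) (dim_col D))) $$ (r mod dim_row D, c mod dim_col D))"

text \<open>Stacked vector [w(k); w(k+1); ...; w(k+q)] with blocks of size d.\<close>
definition stackv :: "nat \<Rightarrow> nat \<Rightarrow> (nat \<Rightarrow> real vec) \<Rightarrow> nat \<Rightarrow> real vec" where
  "stackv q d w k = vec ((q+1) * d) (\<lambda>j. w (k + j div d) $ (j mod d))"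

definition xhat :: "nat \<Rightarrow> real mat \<Rightarrow> real mat \<Rightarrow> real mat \<Rightarrow> real mat \<Rightarrow>
    (nat \<Rightarrow> real vec) \<Rightarrow> (nat \<Rightarrow> real vec) \<Rightarrow> nat \<Rightarrow> real vec" where
  "xhat q A B C D u y k =
     pinv_left (ext_obs q A C) *\<^sub>v
       (stackv q (dim_row C) y k - toeplitz_blk q A B C D *\<^sub>v stackv q (dim_col B) u k)"

definition kappa :: "nat \<Rightarrow> real mat \<Rightarrow> real mat \<Rightarrow> real mat \<Rightarrow> real mat \<Rightarrow>
    (nat \<Rightarrow> real vec) \<Rightarrow> (nat \<Rightarrow> real vec) \<Rightarrow> nat \<Rightarrow> nat \<Rightarrow> real vec" where
  "kappa q A B C D u y k k' = vec (dim_row A) (\<lambda>c.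
      (A ^\<^sub>m (k' - k) *\<^sub>v xhat q A B C D u y k) $ c +
      (\<Sum>l\<in>{k..<k'}. (A ^\<^sub>m (k' - l - 1) * B *\<^sub>v u l) $ c))"

definition zeta :: "real mat \<Rightarrow> real mat \<Rightarrow> real mat \<Rightarrow> real mat \<Rightarrow>
    (nat \<Rightarrow> real vec) \<Rightarrow> (nat \<Rightarrow> real vec) \<Rightarrow> nat \<Rightarrow> nat \<Rightarrow> real vec" where
  "zeta A B C D u y ki k = y k - D *\<^sub>v u k -
     vec (dim_row C) (\<lambda>c. \<Sum>l\<in>{ki..<k}. (C * A ^\<^sub>m (k - l - 1) * B *\<^sub>v u l) $ c)"

definition trans_set :: "(nat \<Rightarrow> nat) \<Rightarrow> (nat \<Rightarrow> nat) \<Rightarrow> nat \<Rightarrow> nat \<Rightarrow> nat \<Rightarrow> nat set" where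
  "trans_set phi ks istar \<nu> \<mu> = {i \<in> {1..istar}. phi (ks (i - 1)) = \<nu> \<and> phi (ks i) = \<mu>}"

definition cols_of :: "nat \<Rightarrow> nat set \<Rightarrow> (nat \<Rightarrow> real vec) \<Rightarrow> real mat" where
  "cols_of d I v = mat d (card I) (\<lambda>(r,c). v (sorted_list_of_set I ! c) $ r)"

end

theory Submission
  imports Defs
begin

text \<open>At a switch from mode nu to mode mu at time k_i, the true state x(k_i) is seen in the
  coordinates of both local estimates. The window before k_i has at least delta_* >= n steps, so
  the extended observability matrix of the nu-estimate is injective, the state estimate at k_(i-1)
  is exactly T_nu^-1 x(k_(i-1)), and kappa_(i-1), which propagates it with the estimated dynamics,
  equals T_nu^-1 x(k_i). After k_i, removing the input contribution from the outputs leaves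
  Z_i = O_mu T_mu^-1 x(k_i), with O_mu the extended observability matrix of the mu-estimate.
  Hence Z = O_mu (T_mu^-1 T_nu) Psi, and the left pseudo-inverse of the injective O_mu and the
  right pseudo-inverse of the full-row-rank Psi cancel the outer factors.\<close>

section \<open>Inverses and pseudo-inverses\<close>

lemma minv_is_inverse:
  assumes M: "M \<in> carrier_mat k k" and inv: "invertible_mat M"
  shows "minv M \<in> carrier_mat k k" "M * minv M = 1\<^sub>m k" "minv M * M = 1\<^sub>m k"
proof -
  obtain B where MB: "M * B = 1\<^sub>m k" and BM: "B * M = 1\<^sub>m (dim_row B)"
    using inv M unfolding invertible_mat_def inverts_mat_def by auto
  have "B \<in> carrier_mat k k"
    using arg_cong[OF MB, of dim_col] arg_cong[OF BM, of dim_col] M by auto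
  then have "\<exists>X. X \<in> carrier_mat (dim_row M) (dim_row M) \<and> inverts_mat M X \<and> inverts_mat X M"
    using MB BM M by (auto simp: inverts_mat_def)
  from someI_ex[OF this]
  have "minv M \<in> carrier_mat k k \<and> inverts_mat M (minv M) \<and> inverts_mat (minv M) M"
    using M unfolding minv_def by simp
  then show "minv M \<in> carrier_mat k k" "M * minv M = 1\<^sub>m k" "minv M * M = 1\<^sub>m k"
    using M unfolding inverts_mat_def by auto
qed

lemma invertible_mat_if_det_nonzero:
  assumes M: "M \<in> carrier_mat k k" and det: "det M \<noteq> (0::real)"
  shows "invertible_mat M"
proof -
  have "M \<in> Units (ring_mat TYPE(real) k ())" by (rule det_non_zero_imp_unit[OF M det])
  then obtain B where "B \<in> carrier_mat k k" "M * B = 1\<^sub>m k" "B * M = 1\<^sub>m k"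
    unfolding Units_def ring_mat_def by auto
  then show ?thesis using M unfolding invertible_mat_def inverts_mat_def by auto
qed

definition inj_mat :: "real mat \<Rightarrow> bool" where
  "inj_mat W \<longleftrightarrow>
     (\<forall>v \<in> carrier_vec (dim_col W). W *\<^sub>v v = 0\<^sub>v (dim_row W) \<longrightarrow> v = 0\<^sub>v (dim_col W))"

lemma inj_matI:
  assumes "W \<in> carrier_mat r c" and "\<And>v. v \<in> carrier_vec c \<Longrightarrow> W *\<^sub>v v = 0\<^sub>v r \<Longrightarrow> v = 0\<^sub>v c"
  shows "inj_mat W"
  using assms unfolding inj_mat_def by auto

lemma inj_matD:
  assumes "inj_mat W" "W \<in> carrier_mat r c" "v \<in> carrier_vec c" "W *\<^sub>v v = 0\<^sub>v r"
  shows "v = 0\<^sub>v c"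
  using assms unfolding inj_mat_def by auto

lemma inj_mat_mult:
  assumes W: "W \<in> carrier_mat r k" and T: "T \<in> carrier_mat k c"
    and "inj_mat W" and "inj_mat T"
  shows "inj_mat (W * T)"
proof (rule inj_matI)
  fix v :: "real vec" assume v: "v \<in> carrier_vec c" and "W * T *\<^sub>v v = 0\<^sub>v r"
  then have "W *\<^sub>v (T *\<^sub>v v) = 0\<^sub>v r" using W T by auto
  then have "T *\<^sub>v v = 0\<^sub>v k" using assms v by (auto intro: inj_matD)
  then show "v = 0\<^sub>v c" using assms v by (auto intro: inj_matD)
qed (use W T in auto)

lemma inj_mat_if_left_inverse:
  assumes T: "T \<in> carrier_mat n n" and S: "S \<in> carrier_mat n n" and ST: "S * T = 1\<^sub>m n"
  shows "inj_mat T"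
proof (rule inj_matI[OF T])
  fix v :: "real vec" assume v: "v \<in> carrier_vec n" and "T *\<^sub>v v = 0\<^sub>v n"
  then have "(S * T) *\<^sub>v v = 0\<^sub>v n" using S T by auto
  then show "v = 0\<^sub>v n" using ST v by auto
qed

lemma inj_mat_if_rank_eq_dim_col:
  assumes M: "M \<in> carrier_mat r c" and rk: "vec_space.rank r M = c"
  shows "inj_mat M"
proof (rule inj_matI[OF M])
  interpret vec_space "TYPE(real)" r .
  fix v assume v: "v \<in> carrier_vec c" and Mv: "M *\<^sub>v v = 0\<^sub>v r"
  have distinct: "distinct (cols M)"
  proof (rule ccontr)
    assume "\<not> distinct (cols M)"
    then have "card (set (cols M)) < c" using M
      by (metis card_distinct card_length cols_length carrier_matD(2) le_neq_implies_less)
    obtain S where S: "maximal S (\<lambda>T. T \<subseteq> set (cols M) \<and> lin_indpt T)"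
      using maximal_exists[of "\<lambda>T. T \<subseteq> set (cols M) \<and> lin_indpt T" "card (set (cols M))" "{}"]
      by (meson List.finite_set card_mono empty_iff empty_subsetI finite_lin_indpt2 rev_finite_subset)
    then have "card S \<le> card (set (cols M))" by (simp add: card_mono maximal_def)
    then show False using rank_card_indpt[OF M S] rk \<open>card (set (cols M)) < c\<close> by simp
  qed
  show "v = 0\<^sub>v c"
    using full_rank_lin_indpt[OF M rk distinct] lin_depI[OF M v _ Mv distinct] by blast
qed

text \<open>A maximal independent set of columns of \<open>P\<close> forms an invertible square matrix \<open>Q\<close>,
  and \<open>Q\<^sup>T w = 0\<close> whenever \<open>P\<^sup>T w = 0\<close>.\<close>

lemma inj_mat_transpose_if_rank_eq_dim_row:
  assumes P: "P \<in> carrier_mat k c" and rk: "vec_space.rank k P = k"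
  shows "inj_mat P\<^sup>T"
proof (rule inj_matI)
  interpret vec_space "TYPE(real)" k .
  fix w assume w: "w \<in> carrier_vec k" and Pw: "P\<^sup>T *\<^sub>v w = 0\<^sub>v c"
  obtain S where S: "maximal S (\<lambda>T. T \<subseteq> set (cols P) \<and> lin_indpt T)"
    using maximal_exists[of "\<lambda>T. T \<subseteq> set (cols P) \<and> lin_indpt T" "card (set (cols P))" "{}"]
    by (meson List.finite_set card_mono empty_iff empty_subsetI finite_lin_indpt2 rev_finite_subset)
  have SP: "S \<subseteq> set (cols P)" and li: "lin_indpt S" using S by (auto simp: maximal_def)
  obtain ss where ss: "set ss = S" "distinct ss"
    using finite_distinct_list[OF finite_subset[OF SP List.finite_set]] by blast
  have len: "length ss = k" using rank_card_indpt[OF P S] rk ss distinct_card by fastforce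
  have ss_carrier: "set ss \<subseteq> carrier_vec k" using SP ss P cols_dim by blast
  define Q where "Q = mat_of_cols k ss"
  have Q: "Q \<in> carrier_mat k k" using len by (simp add: Q_def mat_of_cols_def)
  have cols_Q: "cols Q = ss" using cols_mat_of_cols[OF ss_carrier] by (simp add: Q_def)
  have "det Q \<noteq> 0"
    using lin_indpt_full_rank[OF Q] det_rank_iff[OF Q] cols_Q ss li by simp
  then have det_QT: "det Q\<^sup>T \<noteq> 0" using det_transpose[OF Q] by simp
  have "Q\<^sup>T *\<^sub>v w = 0\<^sub>v k"
  proof (rule eq_vecI)
    fix i assume "i < dim_vec (0\<^sub>v k :: real vec)"
    then have i: "i < k" by simp
    have "ss ! i \<in> set (cols P)" using SP ss i len by auto
    then obtain j where j: "j < dim_col P" "ss ! i = col P j"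
      by (metis cols_length cols_nth in_set_conv_nth)
    have "(Q\<^sup>T *\<^sub>v w) $ i = ss ! i \<bullet> w"
      using i Q cols_Q len by (simp add: cols_nth[symmetric])
    also have "\<dots> = (P\<^sup>T *\<^sub>v w) $ j" using j P by simp
    finally show "(Q\<^sup>T *\<^sub>v w) $ i = 0\<^sub>v k $ i" using Pw j P i by simp
  qed (use Q in simp)
  moreover have "Q\<^sup>T \<in> carrier_mat k k" using Q by simp
  ultimately show "w = 0\<^sub>v k"
    using det_0_iff_vec_prod_zero_field w det_QT by blast
qed (use P in simp)

lemma det_gram_nonzero:
  assumes W: "W \<in> carrier_mat r c" and inj: "inj_mat W"
  shows "det (W\<^sup>T * W) \<noteq> 0"
proof
  assume "det (W\<^sup>T * W) = 0"
  then obtain v where v: "v \<in> carrier_vec c" "v \<noteq> 0\<^sub>v c" and "(W\<^sup>T * W) *\<^sub>v v = 0\<^sub>v c"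
    using det_0_iff_vec_prod_zero_field[of "W\<^sup>T * W" c] W by auto
  then have "(W\<^sup>T *\<^sub>v (W *\<^sub>v v)) \<bullet> v = 0" using W by auto
  then have "(W *\<^sub>v v) \<bullet> (W *\<^sub>v v) = 0"
    using transpose_vec_mult_scalar[OF W v(1), of "W *\<^sub>v v"] W v by auto
  moreover have "W *\<^sub>v v \<in> carrier_vec r" using W v by simp
  ultimately have "W *\<^sub>v v = 0\<^sub>v r" using conjugate_square_eq_0_vec[of "W *\<^sub>v v" r] by simp
  then show False using inj_matD[OF inj W v(1)] v(2) by blast
qed

lemma pinv_left_mult_self:
  assumes W: "W \<in> carrier_mat r c" and inj: "inj_mat W"
  shows "pinv_left W \<in> carrier_mat c r" "pinv_left W * W = 1\<^sub>m c"
proof -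
  have G: "W\<^sup>T * W \<in> carrier_mat c c" using W by auto
  note Gi = minv_is_inverse[OF G invertible_mat_if_det_nonzero[OF G det_gram_nonzero[OF W inj]]]
  show "pinv_left W \<in> carrier_mat c r" unfolding pinv_left_def using Gi(1) W by auto
  have "pinv_left W * W = minv (W\<^sup>T * W) * (W\<^sup>T * W)"
    unfolding pinv_left_def using Gi(1) W by (auto intro!: assoc_mult_mat)
  then show "pinv_left W * W = 1\<^sub>m c" using Gi(3) by simp
qed

lemma mult_pinv_right_self:
  assumes P: "P \<in> carrier_mat k c" and inj: "inj_mat P\<^sup>T"
  shows "pinv_right P \<in> carrier_mat c k" "P * pinv_right P = 1\<^sub>m k"
proof -
  have G: "P * P\<^sup>T \<in> carrier_mat k k" using P by auto
  have "det (P * P\<^sup>T) \<noteq> 0" using det_gram_nonzero[of "P\<^sup>T" c k] P inj by simp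
  note Gi = minv_is_inverse[OF G invertible_mat_if_det_nonzero[OF G this]]
  show "pinv_right P \<in> carrier_mat c k" unfolding pinv_right_def using Gi(1) P by auto
  have "P * pinv_right P = (P * P\<^sup>T) * minv (P * P\<^sup>T)"
    unfolding pinv_right_def using Gi(1) P by (auto intro!: assoc_mult_mat[symmetric])
  then show "P * pinv_right P = 1\<^sub>m k" using Gi(2) by simp
qed

lemma pinv_left_mult_mult_pinv_right:
  assumes W: "W \<in> carrier_mat r n" and M: "M \<in> carrier_mat n n" and P: "P \<in> carrier_mat n k"
    and "inj_mat W" and "inj_mat P\<^sup>T"
  shows "pinv_left W * (W * M * P) * pinv_right P = M"
proof -
  note L = pinv_left_mult_self[OF W \<open>inj_mat W\<close>]
  note R = mult_pinv_right_self[OF P \<open>inj_mat P\<^sup>T\<close>]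
  have MP: "M * P \<in> carrier_mat n k" using M P by simp
  have "pinv_left W * (W * M * P) = pinv_left W * W * (M * P)"
    using assoc_mult_mat[OF W M P] assoc_mult_mat[OF L(1) W MP] by simp
  also have "\<dots> = M * P" using L(2) left_mult_one_mat[OF MP] by simp
  finally have "pinv_left W * (W * M * P) * pinv_right P = M * (P * pinv_right P)"
    using assoc_mult_mat[OF M P R(1)] by simp
  then show ?thesis using R(2) right_mult_one_mat[OF M] by simp
qed

section \<open>Observability matrices\<close>

lemma dim_ext_obs [simp]:
  "dim_row (ext_obs q A C) = (q + 1) * dim_row C" "dim_col (ext_obs q A C) = dim_col C"
  by (simp_all add: ext_obs_def)

lemma ext_obs_carrier: "C \<in> carrier_mat p n \<Longrightarrow> ext_obs q A C \<in> carrier_mat ((q + 1) * p) n"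
  by (auto intro: carrier_matI)

lemma row_ext_obs:
  assumes A: "A \<in> carrier_mat n n" and C: "C \<in> carrier_mat p n" and j: "j < (q + 1) * p"
  shows "row (ext_obs q A C) j = row (C * A ^\<^sub>m (j div p)) (j mod p)"
proof (rule eq_vecI)
  have "j mod p < p" using j by (cases p) auto
  fix c assume "c < dim_vec (row (C * A ^\<^sub>m (j div p)) (j mod p))"
  then have "c < n" using A by (simp split: if_splits)
  then show "row (ext_obs q A C) j $ c = row (C * A ^\<^sub>m (j div p)) (j mod p) $ c"
    using A C j \<open>j mod p < p\<close> by (simp add: ext_obs_def)
qed (use A C in simp)

lemma row_obsv_mat:
  assumes A: "A \<in> carrier_mat n n" and C: "C \<in> carrier_mat p n" and j: "j < n * p"
  shows "row (obsv_mat A C) j = row (C * A ^\<^sub>m (j div p)) (j mod p)"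
proof (rule eq_vecI)
  have "j mod p < p" using j by (cases p) auto
  fix c assume "c < dim_vec (row (C * A ^\<^sub>m (j div p)) (j mod p))"
  then have "c < n" using A by (simp split: if_splits)
  then show "row (obsv_mat A C) j $ c = row (C * A ^\<^sub>m (j div p)) (j mod p) $ c"
    using A C j \<open>j mod p < p\<close> by (simp add: obsv_mat_def)
qed (use A C in \<open>simp add: obsv_mat_def\<close>)

lemma ext_obs_mult_vec:
  assumes A: "A \<in> carrier_mat n n" and C: "C \<in> carrier_mat p n" and j: "j < (q + 1) * p"
  shows "(ext_obs q A C *\<^sub>v v) $ j = (C * A ^\<^sub>m (j div p) *\<^sub>v v) $ (j mod p)"
proof -
  have "j mod p < p" using j by (cases p) auto
  then show ?thesis using row_ext_obs[OF A C j] A C j by simp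
qed

lemma inj_mat_ext_obs:
  assumes A: "A \<in> carrier_mat n n" and C: "C \<in> carrier_mat p n"
    and rk: "mrank (obsv_mat A C) = n" and len: "n \<le> q + 1"
  shows "inj_mat (ext_obs q A C)"
proof (rule inj_matI)
  have O: "obsv_mat A C \<in> carrier_mat (n * p) n" using A C by (simp add: obsv_mat_def)
  fix v assume v: "v \<in> carrier_vec n" and Ov: "ext_obs q A C *\<^sub>v v = 0\<^sub>v ((q + 1) * p)"
  have "obsv_mat A C *\<^sub>v v = 0\<^sub>v (n * p)"
  proof (rule eq_vecI)
    fix j assume "j < dim_vec (0\<^sub>v (n * p) :: real vec)"
    then have j: "j < n * p" by simp
    have j': "j < (q + 1) * p" using less_le_trans[OF j mult_le_mono1[OF len]] .
    have "(obsv_mat A C *\<^sub>v v) $ j = (ext_obs q A C *\<^sub>v v) $ j"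
      using row_obsv_mat[OF A C j] row_ext_obs[OF A C j'] O j j' C by simp
    then show "(obsv_mat A C *\<^sub>v v) $ j = 0\<^sub>v (n * p) $ j" using Ov j j' by simp
  qed (use O in simp)
  moreover have "inj_mat (obsv_mat A C)"
    using inj_mat_if_rank_eq_dim_col[OF O] rk O unfolding mrank_def by simp
  ultimately show "v = 0\<^sub>v n" using O v by (auto intro: inj_matD)
qed (rule ext_obs_carrier[OF C])

lemma similar_pow_mat:
  assumes T: "T \<in> carrier_mat n n" and S: "S \<in> carrier_mat n n"
    and TS: "T * S = 1\<^sub>m n" and ST: "S * T = 1\<^sub>m n" and A: "A \<in> carrier_mat n n"
  shows "(S * A * T) ^\<^sub>m k = S * A ^\<^sub>m k * T"
  using similar_mat_wit_pow_id[of "S * A * T" A S T k] assms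
  unfolding similar_mat_wit_def Let_def by auto

lemma ext_obs_similar:
  assumes T: "T \<in> carrier_mat n n" and S: "S \<in> carrier_mat n n"
    and TS: "T * S = 1\<^sub>m n" and ST: "S * T = 1\<^sub>m n"
    and A: "A \<in> carrier_mat n n" and C: "C \<in> carrier_mat p n"
  shows "ext_obs q (S * A * T) (C * T) = ext_obs q A C * T"
proof -
  have pow: "C * T * (S * A * T) ^\<^sub>m a = C * A ^\<^sub>m a * T" for a
  proof -
    have Aa: "A ^\<^sub>m a \<in> carrier_mat n n" "A ^\<^sub>m a * T \<in> carrier_mat n n" using A T by auto
    have "C * T * (S * A ^\<^sub>m a * T) = C * (T * (S * (A ^\<^sub>m a * T)))"
      using assoc_mult_mat[OF C T, of "S * A ^\<^sub>m a * T" n] assoc_mult_mat[OF S Aa(1) T] S Aa by simp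
    also have "T * (S * (A ^\<^sub>m a * T)) = A ^\<^sub>m a * T"
      using assoc_mult_mat[OF T S Aa(2)] TS left_mult_one_mat[OF Aa(2)] by simp
    finally show ?thesis using similar_pow_mat[OF T S TS ST A] assoc_mult_mat[OF C Aa(1) T] by simp
  qed
  show ?thesis
  proof (rule eq_matI)
    fix j c assume "j < dim_row (ext_obs q A C * T)" "c < dim_col (ext_obs q A C * T)"
    then have j: "j < (q + 1) * p" and c: "c < n" using C T by auto
    have "j mod p < p" using j by (cases p) auto
    then show "ext_obs q (S * A * T) (C * T) $$ (j, c) = (ext_obs q A C * T) $$ (j, c)"
      using row_ext_obs[OF A C j] pow C T j c by (simp add: ext_obs_def)
  qed (use C T in simp_all)
qed

section \<open>Trajectories of a linear time-invariant system\<close>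

definition vec_sum :: "nat \<Rightarrow> nat set \<Rightarrow> (nat \<Rightarrow> real vec) \<Rightarrow> real vec" where
  "vec_sum d L f = vec d (\<lambda>c. \<Sum>l\<in>L. f l $ c)"

lemma vec_sum_carrier [simp]: "vec_sum d L f \<in> carrier_vec d"
  and dim_vec_sum [simp]: "dim_vec (vec_sum d L f) = d"
  and index_vec_sum [simp]: "c < d \<Longrightarrow> vec_sum d L f $ c = (\<Sum>l\<in>L. f l $ c)"
  by (simp_all add: vec_sum_def)

lemma mult_mat_vec_sum:
  assumes M: "M \<in> carrier_mat r k" and f: "\<And>l. l \<in> L \<Longrightarrow> f l \<in> carrier_vec k"
  shows "M *\<^sub>v vec_sum k L f = vec_sum r L (\<lambda>l. M *\<^sub>v f l)"
proof (rule eq_vecI)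
  fix i assume "i < dim_vec (vec_sum r L (\<lambda>l. M *\<^sub>v f l))"
  then have i: "i < r" by simp
  have "(M *\<^sub>v vec_sum k L f) $ i = (\<Sum>j<k. M $$ (i, j) * (\<Sum>l\<in>L. f l $ j))"
    using M i by (simp add: scalar_prod_def lessThan_atLeast0)
  also have "\<dots> = (\<Sum>l\<in>L. \<Sum>j<k. M $$ (i, j) * f l $ j)"
    by (simp add: sum_distrib_left sum.swap[of _ L])
  also have "\<dots> = (\<Sum>l\<in>L. (M *\<^sub>v f l) $ i)"
  proof (rule sum.cong[OF refl])
    fix l assume "l \<in> L"
    then have "dim_vec (f l) = k" using f by auto
    then show "(\<Sum>j<k. M $$ (i, j) * f l $ j) = (M *\<^sub>v f l) $ i"
      using M i by (auto simp: scalar_prod_def lessThan_atLeast0 intro!: sum.cong)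
  qed
  finally show "(M *\<^sub>v vec_sum k L f) $ i = vec_sum r L (\<lambda>l. M *\<^sub>v f l) $ i"
    using i by simp
qed (use M in simp)

definition lti_window :: "nat \<Rightarrow> nat \<Rightarrow> real mat \<Rightarrow> real mat \<Rightarrow> real mat \<Rightarrow> real mat \<Rightarrow>
    (nat \<Rightarrow> real vec) \<Rightarrow> (nat \<Rightarrow> real vec) \<Rightarrow> (nat \<Rightarrow> real vec) \<Rightarrow> nat \<Rightarrow> nat \<Rightarrow> bool" where
  "lti_window n m A B C D x u y a b \<longleftrightarrow>
     (\<forall>l\<in>{a..<b}. x l \<in> carrier_vec n \<and> u l \<in> carrier_vec m \<and>
        x (Suc l) = A *\<^sub>v x l + B *\<^sub>v u l \<and> y l = C *\<^sub>v x l + D *\<^sub>v u l)"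

lemma pow_mat_Suc_left:
  assumes A: "A \<in> carrier_mat n n"
  shows "A ^\<^sub>m Suc k = A * A ^\<^sub>m k"
proof (induction k)
  case (Suc k)
  have "A ^\<^sub>m Suc (Suc k) = A * A ^\<^sub>m k * A" using Suc by simp
  then show ?case using assoc_mult_mat[OF A pow_carrier_mat[OF A] A] by simp
qed (use A in simp)

lemma lti_window_state:
  assumes A: "A \<in> carrier_mat n n" and B: "B \<in> carrier_mat n m"
    and w: "lti_window n m A B C D x u y a b" and "a < b" "a \<le> k" "k \<le> b"
  shows "x k = A ^\<^sub>m (k - a) *\<^sub>v x a + vec_sum n {a..<k} (\<lambda>l. A ^\<^sub>m (k - l - 1) * B *\<^sub>v u l)"
  using \<open>a \<le> k\<close> \<open>k \<le> b\<close>
proof (induction k rule: dec_induct)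
  case base
  have "x a \<in> carrier_vec n" using w \<open>a < b\<close> by (simp add: lti_window_def)
  then show ?case using A by (intro eq_vecI) auto
next
  case (step k)
  have xa: "x a \<in> carrier_vec n" using w \<open>a < b\<close> by (simp add: lti_window_def)
  have xk: "x k \<in> carrier_vec n" and uk: "u k \<in> carrier_vec m"
    and x_Suc: "x (Suc k) = A *\<^sub>v x k + B *\<^sub>v u k"
    using w step.hyps step.prems by (auto simp: lti_window_def)
  have ul: "u l \<in> carrier_vec m" if "l \<in> {a..<k}" for l
    using w that step.prems by (auto simp: lti_window_def)
  define S where "S = vec_sum n {a..<k} (\<lambda>l. A ^\<^sub>m (k - l - 1) * B *\<^sub>v u l)"
  have "A *\<^sub>v S = vec_sum n {a..<k} (\<lambda>l. A *\<^sub>v (A ^\<^sub>m (k - l - 1) * B *\<^sub>v u l))"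
    unfolding S_def using ul
    by (intro mult_mat_vec_sum[OF A])
      (auto intro: mult_mat_vec_carrier[OF mult_carrier_mat[OF pow_carrier_mat[OF A] B]])
  also have "\<dots> = vec_sum n {a..<k} (\<lambda>l. A ^\<^sub>m (Suc k - l - 1) * B *\<^sub>v u l)"
  proof -
    have "A *\<^sub>v (A ^\<^sub>m (k - l - 1) * B *\<^sub>v u l) = A ^\<^sub>m (Suc k - l - 1) * B *\<^sub>v u l"
      if "l \<in> {a..<k}" for l
    proof -
      have "Suc k - l - 1 = Suc (k - l - 1)" using that by auto
      then show ?thesis
        using pow_mat_Suc_left[OF A, of "k - l - 1"] assoc_mult_mat[OF A pow_carrier_mat[OF A] B]
          assoc_mult_mat_vec[OF A mult_carrier_mat[OF pow_carrier_mat[OF A] B] ul[OF that]]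
        by simp
    qed
    then show ?thesis unfolding vec_sum_def by (intro arg_cong[where f = "vec n"] ext sum.cong) auto
  qed
  finally have AS: "A *\<^sub>v S = vec_sum n {a..<k} (\<lambda>l. A ^\<^sub>m (Suc k - l - 1) * B *\<^sub>v u l)" .
  have Ak: "A *\<^sub>v (A ^\<^sub>m (k - a) *\<^sub>v x a) = A ^\<^sub>m (Suc k - a) *\<^sub>v x a"
    using pow_mat_Suc_left[OF A, of "k - a"] assoc_mult_mat_vec[OF A pow_carrier_mat[OF A] xa]
      step.hyps by (simp add: Suc_diff_le)
  have "x (Suc k) = A *\<^sub>v (A ^\<^sub>m (k - a) *\<^sub>v x a + S) + B *\<^sub>v u k"
    using x_Suc step.IH step.prems by (simp add: S_def)
  also have "A *\<^sub>v (A ^\<^sub>m (k - a) *\<^sub>v x a + S) = A *\<^sub>v (A ^\<^sub>m (k - a) *\<^sub>v x a) + A *\<^sub>v S"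
    using mult_add_distrib_mat_vec[OF A mult_mat_vec_carrier[OF pow_carrier_mat[OF A] xa]]
    by (simp add: S_def)
  finally show ?case
    unfolding Ak AS using step.hyps A B xa uk by (intro eq_vecI) auto
qed

lemma lti_window_zeta:
  assumes A: "A \<in> carrier_mat n n" and B: "B \<in> carrier_mat n m"
    and C: "C \<in> carrier_mat p n" and D: "D \<in> carrier_mat p m"
    and w: "lti_window n m A B C D x u y a b" and "a \<le> k" "k < b"
  shows "zeta A B C D u y a k = C * A ^\<^sub>m (k - a) *\<^sub>v x a"
proof -
  have xa: "x a \<in> carrier_vec n" and uk: "u k \<in> carrier_vec m"
    and y: "y k = C *\<^sub>v x k + D *\<^sub>v u k"
    using w assms(6,7) by (auto simp: lti_window_def)
  have ul: "u l \<in> carrier_vec m" if "l \<in> {a..<k}" for l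
    using w that \<open>k < b\<close> by (auto simp: lti_window_def)
  define S where "S = vec_sum n {a..<k} (\<lambda>l. A ^\<^sub>m (k - l - 1) * B *\<^sub>v u l)"
  have x: "x k = A ^\<^sub>m (k - a) *\<^sub>v x a + S"
    unfolding S_def using lti_window_state[OF A B w _ \<open>a \<le> k\<close>] assms(6,7) by simp
  have "C *\<^sub>v S = vec_sum p {a..<k} (\<lambda>l. C *\<^sub>v (A ^\<^sub>m (k - l - 1) * B *\<^sub>v u l))"
    unfolding S_def using ul
    by (intro mult_mat_vec_sum[OF C])
      (auto intro: mult_mat_vec_carrier[OF mult_carrier_mat[OF pow_carrier_mat[OF A] B]])
  also have "\<dots> = vec_sum p {a..<k} (\<lambda>l. C * A ^\<^sub>m (k - l - 1) * B *\<^sub>v u l)"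
  proof -
    have "C *\<^sub>v (A ^\<^sub>m e * B *\<^sub>v u l) = C * A ^\<^sub>m e * B *\<^sub>v u l" if "l \<in> {a..<k}" for e l
      using assoc_mult_mat[OF C pow_carrier_mat[OF A] B, of e]
        assoc_mult_mat_vec[OF C mult_carrier_mat[OF pow_carrier_mat[OF A] B] ul[OF that], of e]
      by simp
    then show ?thesis unfolding vec_sum_def by (intro arg_cong[where f = "vec p"] ext sum.cong) auto
  qed
  finally have CS: "vec (dim_row C) (\<lambda>c. \<Sum>l\<in>{a..<k}. (C * A ^\<^sub>m (k - l - 1) * B *\<^sub>v u l) $ c)
      = C *\<^sub>v S"
    using C by (simp add: vec_sum_def)
  have Ax: "A ^\<^sub>m (k - a) *\<^sub>v x a \<in> carrier_vec n"
    using mult_mat_vec_carrier[OF pow_carrier_mat[OF A] xa] .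
  have y': "y k = C * A ^\<^sub>m (k - a) *\<^sub>v x a + C *\<^sub>v S + D *\<^sub>v u k"
    using y x mult_add_distrib_mat_vec[OF C Ax, of S] assoc_mult_mat_vec[OF C pow_carrier_mat[OF A] xa]
    by (simp add: S_def)
  show ?thesis
  proof (rule eq_vecI)
    fix c assume "c < dim_vec (C * A ^\<^sub>m (k - a) *\<^sub>v x a)"
    then have c: "c < p" using C by simp
    show "zeta A B C D u y a k $ c = (C * A ^\<^sub>m (k - a) *\<^sub>v x a) $ c"
      unfolding zeta_def CS y' using c C D uk by simp
  qed (use C in \<open>simp add: zeta_def\<close>)
qed

lemma lti_window_stackv_zeta:
  assumes A: "A \<in> carrier_mat n n" and B: "B \<in> carrier_mat n m"
    and C: "C \<in> carrier_mat p n" and D: "D \<in> carrier_mat p m"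
    and w: "lti_window n m A B C D x u y a b" and len: "a + q < b"
  shows "stackv q p (zeta A B C D u y a) a = ext_obs q A C *\<^sub>v x a"
proof (rule eq_vecI)
  fix j assume "j < dim_vec (ext_obs q A C *\<^sub>v x a)"
  then have j: "j < (q + 1) * p" using C by simp
  have "j div p \<le> q" using less_mult_imp_div_less[OF j] by simp
  have "j mod p < p" using j by (cases p) auto
  have "zeta A B C D u y a (a + j div p) = C * A ^\<^sub>m (j div p) *\<^sub>v x a"
    using lti_window_zeta[OF A B C D w, of "a + j div p"] len \<open>j div p \<le> q\<close> by simp
  with \<open>j mod p < p\<close> show "stackv q p (zeta A B C D u y a) a $ j = (ext_obs q A C *\<^sub>v x a) $ j"
    using ext_obs_mult_vec[OF A C j] j by (simp add: stackv_def)
qed (use C in \<open>simp add: stackv_def\<close>)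

lemma sum_lessThan_mult_div_mod:
  fixes g :: "nat \<Rightarrow> nat \<Rightarrow> 'a :: comm_monoid_add"
  shows "(\<Sum>c < Q * m. g (c div m) (c mod m)) = (\<Sum>b < Q. \<Sum>s < m. g b s)"
proof -
  have "(\<Sum>c \<in> {b * m..<b * m + m}. g (c div m) (c mod m)) = (\<Sum>s < m. g b s)" for b
  proof -
    have "(\<Sum>c \<in> {b * m..<b * m + m}. g (c div m) (c mod m))
        = (\<Sum>s \<in> {0..<m}. g ((s + b * m) div m) ((s + b * m) mod m))"
      using sum.shift_bounds_nat_ivl[of "\<lambda>c. g (c div m) (c mod m)" 0 "b * m" m]
      by (simp add: add.commute)
    also have "\<dots> = (\<Sum>s < m. g b s)" by (intro sum.cong) auto
    finally show ?thesis .
  qed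
  then show ?thesis using sum.nat_group[of "\<lambda>c. g (c div m) (c mod m)" m Q] by simp
qed

lemma toeplitz_blk_mult_stackv:
  assumes A: "A \<in> carrier_mat n n" and B: "B \<in> carrier_mat n m"
    and C: "C \<in> carrier_mat p n" and D: "D \<in> carrier_mat p m"
    and u: "\<And>i. i \<le> q \<Longrightarrow> u (a + i) \<in> carrier_vec m" and j: "j < (q + 1) * p"
  shows "(toeplitz_blk q A B C D *\<^sub>v stackv q m u a) $ j =
    (D *\<^sub>v u (a + j div p)) $ (j mod p) +
    (\<Sum>l\<in>{a..<a + j div p}. (C * A ^\<^sub>m (a + j div p - l - 1) * B *\<^sub>v u l) $ (j mod p))"
proof -
  define i r where "i = j div p" and "r = j mod p"
  have i: "i \<le> q" unfolding i_def using less_mult_imp_div_less[OF j] by simp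
  have r: "r < p" unfolding r_def using j by (cases p) auto
  define blk where
    "blk b = (if i = b then D else if b < i then C * A ^\<^sub>m (i - b - 1) * B else 0\<^sub>m p m)" for b
  have blk: "blk b \<in> carrier_mat p m" for b
    unfolding blk_def using A B C D by auto
  have "(toeplitz_blk q A B C D *\<^sub>v stackv q m u a) $ j =
      (\<Sum>c < (q + 1) * m. blk (c div m) $$ (r, c mod m) * u (a + c div m) $ (c mod m))"
    unfolding blk_def i_def r_def using j D
    by (auto simp: toeplitz_blk_def stackv_def scalar_prod_def Let_def lessThan_atLeast0
        intro!: sum.cong)
  also have "\<dots> = (\<Sum>b < q + 1. \<Sum>s < m. blk b $$ (r, s) * u (a + b) $ s)"
    by (rule sum_lessThan_mult_div_mod)
  also have "\<dots> = (\<Sum>b < q + 1. (blk b *\<^sub>v u (a + b)) $ r)"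
  proof (rule sum.cong[OF refl])
    fix b assume "b \<in> {..<q + 1}"
    then have "u (a + b) \<in> carrier_vec m" using u by auto
    then show "(\<Sum>s < m. blk b $$ (r, s) * u (a + b) $ s) = (blk b *\<^sub>v u (a + b)) $ r"
      using blk[of b] r by (simp add: scalar_prod_def lessThan_atLeast0)
  qed
  also have "\<dots> = (\<Sum>b < i. (blk b *\<^sub>v u (a + b)) $ r) + (blk i *\<^sub>v u (a + i)) $ r"
  proof -
    have "{..<q + 1} = {..<Suc i} \<union> {Suc i..<q + 1}" using i by auto
    moreover have "(\<Sum>b \<in> {Suc i..<q + 1}. (blk b *\<^sub>v u (a + b)) $ r) = 0"
      using u r by (intro sum.neutral) (auto simp: blk_def)
    ultimately show ?thesis by (simp add: sum.union_disjoint ivl_disj_int_one(2))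
  qed
  also have "(\<Sum>b < i. (blk b *\<^sub>v u (a + b)) $ r) =
      (\<Sum>l\<in>{a..<a + i}. (C * A ^\<^sub>m (a + i - l - 1) * B *\<^sub>v u l) $ r)"
    using sum.shift_bounds_nat_ivl[of "\<lambda>l. (C * A ^\<^sub>m (a + i - l - 1) * B *\<^sub>v u l) $ r" 0 a i]
    by (auto simp: blk_def lessThan_atLeast0 add.commute intro!: sum.cong)
  also have "(blk i *\<^sub>v u (a + i)) $ r = (D *\<^sub>v u (a + i)) $ r" by (simp add: blk_def)
  finally show ?thesis unfolding i_def r_def by (simp add: add.commute)
qed

lemma stackv_minus_toeplitz:
  assumes A: "A \<in> carrier_mat n n" and B: "B \<in> carrier_mat n m"
    and C: "C \<in> carrier_mat p n" and D: "D \<in> carrier_mat p m"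
    and u: "\<And>i. i \<le> q \<Longrightarrow> u (a + i) \<in> carrier_vec m"
  shows "stackv q p y a - toeplitz_blk q A B C D *\<^sub>v stackv q m u a
    = stackv q p (zeta A B C D u y a) a"
proof (rule eq_vecI)
  fix j assume "j < dim_vec (stackv q p (zeta A B C D u y a) a)"
  then have j: "j < (q + 1) * p" by (simp add: stackv_def)
  then have "j mod p < p" by (cases p) auto
  then show "(stackv q p y a - toeplitz_blk q A B C D *\<^sub>v stackv q m u a) $ j
      = stackv q p (zeta A B C D u y a) a $ j"
    using toeplitz_blk_mult_stackv[where u = u and a = a, OF A B C D u j] j C D
    by (simp add: stackv_def zeta_def toeplitz_blk_def)
qed (use D in \<open>simp add: stackv_def toeplitz_blk_def\<close>)

lemma lti_window_xhat:
  assumes A: "A \<in> carrier_mat n n" and B: "B \<in> carrier_mat n m"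
    and C: "C \<in> carrier_mat p n" and D: "D \<in> carrier_mat p m"
    and w: "lti_window n m A B C D x u y a b" and len: "a + q < b"
    and inj: "inj_mat (ext_obs q A C)"
  shows "xhat q A B C D u y a = x a"
proof -
  note O = ext_obs_carrier[OF C, of q A]
  have dims: "dim_row C = p" "dim_col B = m" using B C by auto
  have u: "u (a + i) \<in> carrier_vec m" if "i \<le> q" for i
    using w that len by (auto simp: lti_window_def)
  have xa: "x a \<in> carrier_vec n" using w len by (auto simp: lti_window_def)
  have "stackv q p y a - toeplitz_blk q A B C D *\<^sub>v stackv q m u a = ext_obs q A C *\<^sub>v x a"
    using stackv_minus_toeplitz[where u = u and a = a, OF A B C D u]
      lti_window_stackv_zeta[OF A B C D w len] by simp
  then have "xhat q A B C D u y a = pinv_left (ext_obs q A C) *\<^sub>v (ext_obs q A C *\<^sub>v x a)"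
    unfolding xhat_def dims by simp
  also have "\<dots> = (pinv_left (ext_obs q A C) * ext_obs q A C) *\<^sub>v x a"
    using assoc_mult_mat_vec[OF pinv_left_mult_self(1)[OF O inj] O xa] by simp
  also have "\<dots> = x a" using pinv_left_mult_self(2)[OF O inj] xa by simp
  finally show ?thesis .
qed

lemma lti_window_kappa:
  assumes A: "A \<in> carrier_mat n n" and B: "B \<in> carrier_mat n m"
    and w: "lti_window n m A B C D x u y a b" and "a < b"
    and xhat: "xhat q A B C D u y a = x a"
  shows "kappa q A B C D u y a b = x b"
proof -
  have "x b = A ^\<^sub>m (b - a) *\<^sub>v x a + vec_sum n {a..<b} (\<lambda>l. A ^\<^sub>m (b - l - 1) * B *\<^sub>v u l)"
    using lti_window_state[OF A B w \<open>a < b\<close>, of b] \<open>a < b\<close> by simp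
  then show ?thesis
    unfolding kappa_def xhat using A by (intro eq_vecI) auto
qed

lemma lti_window_similar:
  assumes T: "T \<in> carrier_mat n n" and S: "S \<in> carrier_mat n n" and TS: "T * S = 1\<^sub>m n"
    and A: "A \<in> carrier_mat n n" and B: "B \<in> carrier_mat n m" and C: "C \<in> carrier_mat p n"
    and w: "lti_window n m A B C D x u y a b"
  shows "lti_window n m (S * A * T) (S * B) (C * T) D (\<lambda>l. S *\<^sub>v x l) u y a b"
  unfolding lti_window_def
proof (intro ballI conjI)
  fix l assume "l \<in> {a..<b}"
  then have xl: "x l \<in> carrier_vec n" and ul: "u l \<in> carrier_vec m"
    and x_Suc: "x (Suc l) = A *\<^sub>v x l + B *\<^sub>v u l" and y: "y l = C *\<^sub>v x l + D *\<^sub>v u l"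
    using w by (auto simp: lti_window_def)
  have Sx: "S *\<^sub>v x l \<in> carrier_vec n" using S xl by simp
  have TSx: "T *\<^sub>v (S *\<^sub>v x l) = x l" using assoc_mult_mat_vec[OF T S xl] TS xl by simp
  show "S *\<^sub>v x l \<in> carrier_vec n" by (rule Sx)
  show "u l \<in> carrier_vec m" by (rule ul)
  have "S * A * T *\<^sub>v (S *\<^sub>v x l) = S *\<^sub>v (A *\<^sub>v x l)"
    using assoc_mult_mat_vec[OF mult_carrier_mat[OF S A] T Sx] assoc_mult_mat_vec[OF S A xl] TSx
    by simp
  moreover have "S * B *\<^sub>v u l = S *\<^sub>v (B *\<^sub>v u l)" using assoc_mult_mat_vec[OF S B ul] .
  ultimately show "S *\<^sub>v x (Suc l) = S * A * T *\<^sub>v (S *\<^sub>v x l) + S * B *\<^sub>v u l"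
    using x_Suc mult_add_distrib_mat_vec[OF S, of "A *\<^sub>v x l" "B *\<^sub>v u l"] A B xl ul by simp
  show "y l = C * T *\<^sub>v (S *\<^sub>v x l) + D *\<^sub>v u l"
    using y assoc_mult_mat_vec[OF C T Sx] TSx by simp
qed

lemma inj_mat_ext_obs_estimate:
  assumes min: "minimal_deg n m p A B C D"
    and T: "T \<in> carrier_mat n n" and T_inv: "invertible_mat T" and len_n: "n \<le> q + 1"
  shows "inj_mat (ext_obs q (minv T * A * T) (C * T))"
proof -
  have A: "A \<in> carrier_mat n n" and C: "C \<in> carrier_mat p n"
    and rk: "mrank (obsv_mat A C) = n"
    using min unfolding minimal_deg_def by auto
  note S = minv_is_inverse[OF T T_inv]
  note O = ext_obs_carrier[OF C, of q A]
  have "inj_mat (ext_obs q A C * T)"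
    by (rule inj_mat_mult[OF O T inj_mat_ext_obs[OF A C rk len_n] inj_mat_if_left_inverse[OF T S(1,3)]])
  then show ?thesis using ext_obs_similar[OF T S A C] by simp
qed

lemma estimated_lti_window:
  assumes min: "minimal_deg n m p A B C D"
    and T: "T \<in> carrier_mat n n" and T_inv: "invertible_mat T"
    and len_n: "n \<le> q + 1" and w: "lti_window n m A B C D x u y a b" and len: "a + q < b"
  shows "kappa q (minv T * A * T) (minv T * B) (C * T) D u y a b = minv T *\<^sub>v x b"
    and "stackv q p (zeta (minv T * A * T) (minv T * B) (C * T) D u y a) a
      = ext_obs q (minv T * A * T) (C * T) *\<^sub>v (minv T *\<^sub>v x a)"
proof -
  have A: "A \<in> carrier_mat n n" and B: "B \<in> carrier_mat n m"
    and C: "C \<in> carrier_mat p n" and D: "D \<in> carrier_mat p m"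
    using min unfolding minimal_deg_def by auto
  note S = minv_is_inverse[OF T T_inv]
  have Ah: "minv T * A * T \<in> carrier_mat n n" and Bh: "minv T * B \<in> carrier_mat n m"
    and Ch: "C * T \<in> carrier_mat p n"
    using S(1) A B C T by auto
  note inj = inj_mat_ext_obs_estimate[OF min T T_inv len_n]
  note w' = lti_window_similar[OF T S(1,2) A B C w]
  show "kappa q (minv T * A * T) (minv T * B) (C * T) D u y a b = minv T *\<^sub>v x b"
    using lti_window_kappa[OF Ah Bh w' _ lti_window_xhat[OF Ah Bh Ch D w' len inj]] len by simp
  show "stackv q p (zeta (minv T * A * T) (minv T * B) (C * T) D u y a) a
      = ext_obs q (minv T * A * T) (C * T) *\<^sub>v (minv T *\<^sub>v x a)"
    using lti_window_stackv_zeta[OF Ah Bh Ch D w' len] .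
qed

lemma cols_of_cong:
  assumes "finite I" and "\<And>i. i \<in> I \<Longrightarrow> f i = g i"
  shows "cols_of d I f = cols_of d I g"
proof -
  have "sorted_list_of_set I ! c \<in> I" if "c < card I" for c
    using that assms(1) by (metis length_sorted_list_of_set nth_mem set_sorted_list_of_set)
  then show ?thesis using assms(2) unfolding cols_of_def by (intro eq_matI) auto
qed

lemma cols_of_mult:
  assumes W: "W \<in> carrier_mat r c" and I: "finite I"
    and g: "\<And>i. i \<in> I \<Longrightarrow> g i \<in> carrier_vec c"
  shows "cols_of r I (\<lambda>i. W *\<^sub>v g i) = W * cols_of c I g"
proof (rule eq_matI)
  fix j k assume "j < dim_row (W * cols_of c I g)" and "k < dim_col (W * cols_of c I g)"
  then have j: "j < r" and k: "k < card I" using W by (auto simp: cols_of_def)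
  then have "sorted_list_of_set I ! k \<in> I" using I
    by (metis length_sorted_list_of_set nth_mem set_sorted_list_of_set)
  then have "dim_vec (g (sorted_list_of_set I ! k)) = c" using g by auto
  then show "cols_of r I (\<lambda>i. W *\<^sub>v g i) $$ (j, k) = (W * cols_of c I g) $$ (j, k)"
    using j k W by (auto simp: cols_of_def scalar_prod_def intro!: sum.cong)
qed (use W in \<open>auto simp: cols_of_def\<close>)

section \<open>Transitions of the switched system\<close>

locale switched_lss =
  fixes n m p \<sigma> N istar :: nat
    and \<phi> ks :: "nat \<Rightarrow> nat"
    and A B C D T :: "nat \<Rightarrow> real mat"
    and x u y :: "nat \<Rightarrow> real vec"
  assumes ks0: "ks 0 = 1"
    and ksN: "ks (Suc istar) = N"
    and ks_mono: "\<forall>i\<le>istar. ks i < ks (Suc i)"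
    and phi_const: "\<forall>i\<le>istar. \<forall>k\<in>{ks i..<ks (Suc i)}. \<phi> k = \<phi> (ks i)"
    and minimal: "\<forall>j\<in>{1..\<sigma>}. minimal_deg n m p (A j) (B j) (C j) (D j)"
    and dwell: "dwell_min ks istar \<ge> n"
    and T_carrier: "\<forall>j\<in>{1..\<sigma>}. T j \<in> carrier_mat n n"
    and T_inv: "\<forall>j\<in>{1..\<sigma>}. invertible_mat (T j)"
    and u_dim: "\<forall>k\<in>{1..N}. u k \<in> carrier_vec m"
    and x_dim: "\<forall>k\<in>{1..N}. x k \<in> carrier_vec n"
    and state_eq: "\<forall>k\<in>{1..<N}. x (Suc k) = A (\<phi> k) *\<^sub>v x k + B (\<phi> k) *\<^sub>v u k"
    and output_eq: "\<forall>k\<in>{1..N}. y k = C (\<phi> k) *\<^sub>v x k + D (\<phi> k) *\<^sub>v u k"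
begin

lemma mode_data:
  assumes "j \<in> {1..\<sigma>}"
  shows "minimal_deg n m p (A j) (B j) (C j) (D j)" and "T j \<in> carrier_mat n n"
    and "invertible_mat (T j)" and "C j \<in> carrier_mat p n"
  using assms minimal T_carrier T_inv unfolding minimal_deg_def by auto

lemma ks_mono_le:
  assumes "j \<le> k" and "k \<le> Suc istar"
  shows "ks j \<le> ks k"
  using assms
proof (induction k rule: dec_induct)
  case (step k)
  then have "ks k < ks (Suc k)" using ks_mono by simp
  then show ?case using step by simp
qed simp

lemma switching_interval:
  assumes "i \<le> istar"
  shows "1 \<le> ks i" and "ks i + (dwell_min ks istar - 1) < ks (Suc i)" and "ks (Suc i) \<le> N"
proof -
  show "1 \<le> ks i" using ks_mono_le[of 0 i] ks0 assms by simp
  have "dwell_min ks istar \<le> ks (Suc i) - ks i"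
    unfolding dwell_min_def using assms by (intro Min_le) auto
  moreover have "ks i < ks (Suc i)" using ks_mono assms by simp
  ultimately show "ks i + (dwell_min ks istar - 1) < ks (Suc i)" by linarith
  show "ks (Suc i) \<le> N" using ks_mono_le[of "Suc i" "Suc istar"] ksN assms by simp
qed

lemma mode_window:
  assumes i: "i \<le> istar" and j: "\<phi> (ks i) = j"
  shows "lti_window n m (A j) (B j) (C j) (D j) x u y (ks i) (ks (Suc i))"
  unfolding lti_window_def
proof
  fix l assume l: "l \<in> {ks i..<ks (Suc i)}"
  then have "l \<in> {1..<N}" using switching_interval[OF i] by auto
  moreover have "\<phi> l = j" using phi_const[rule_format, OF i l] j by simp
  ultimately show "x l \<in> carrier_vec n \<and> u l \<in> carrier_vec m \<and>
      x (Suc l) = A j *\<^sub>v x l + B j *\<^sub>v u l \<and> y l = C j *\<^sub>v x l + D j *\<^sub>v u l"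
    using u_dim x_dim state_eq output_eq by simp
qed

lemma transition_estimates:
  assumes \<nu>: "\<nu> \<in> {1..\<sigma>}" and \<mu>: "\<mu> \<in> {1..\<sigma>}" and i: "i \<in> trans_set \<phi> ks istar \<nu> \<mu>"
  defines "q \<equiv> dwell_min ks istar - 1"
  shows "kappa q (minv (T \<nu>) * A \<nu> * T \<nu>) (minv (T \<nu>) * B \<nu>) (C \<nu> * T \<nu>) (D \<nu>) u y
      (ks (i - 1)) (ks i) = minv (T \<nu>) *\<^sub>v x (ks i)"
    and "stackv q p (zeta (minv (T \<mu>) * A \<mu> * T \<mu>) (minv (T \<mu>) * B \<mu>) (C \<mu> * T \<mu>) (D \<mu>) u y
      (ks i)) (ks i) = ext_obs q (minv (T \<mu>) * A \<mu> * T \<mu>) (C \<mu> * T \<mu>) *\<^sub>v (minv (T \<mu>) *\<^sub>v x (ks i))"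
proof -
  have i: "1 \<le> i" "i \<le> istar" "\<phi> (ks (i - 1)) = \<nu>" "\<phi> (ks i) = \<mu>"
    using i by (auto simp: trans_set_def)
  then have prev: "i - 1 \<le> istar" "Suc (i - 1) = i" by auto
  have len_n: "n \<le> q + 1" using dwell unfolding q_def by linarith
  have "ks (i - 1) + q < ks i"
    using switching_interval(2)[OF prev(1)] prev(2) unfolding q_def by simp
  from estimated_lti_window(1)[OF mode_data(1-3)[OF \<nu>] len_n mode_window[OF prev(1) i(3), unfolded prev(2)] this]
  show "kappa q (minv (T \<nu>) * A \<nu> * T \<nu>) (minv (T \<nu>) * B \<nu>) (C \<nu> * T \<nu>) (D \<nu>) u y
      (ks (i - 1)) (ks i) = minv (T \<nu>) *\<^sub>v x (ks i)" .
  have "ks i + q < ks (Suc i)" using switching_interval(2)[OF i(2)] unfolding q_def .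
  from estimated_lti_window(2)[OF mode_data(1-3)[OF \<mu>] len_n mode_window[OF i(2) i(4)] this]
  show "stackv q p (zeta (minv (T \<mu>) * A \<mu> * T \<mu>) (minv (T \<mu>) * B \<mu>) (C \<mu> * T \<mu>) (D \<mu>) u y
      (ks i)) (ks i) = ext_obs q (minv (T \<mu>) * A \<mu> * T \<mu>) (C \<mu> * T \<mu>) *\<^sub>v (minv (T \<mu>) *\<^sub>v x (ks i))" .
qed

lemma transition_data_factorization:
  assumes \<nu>: "\<nu> \<in> {1..\<sigma>}" and \<mu>: "\<mu> \<in> {1..\<sigma>}"
  defines "q \<equiv> dwell_min ks istar - 1" and "I \<equiv> trans_set \<phi> ks istar \<nu> \<mu>"
  shows "cols_of ((q + 1) * p) I (\<lambda>i. stackv q p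
      (zeta (minv (T \<mu>) * A \<mu> * T \<mu>) (minv (T \<mu>) * B \<mu>) (C \<mu> * T \<mu>) (D \<mu>) u y (ks i)) (ks i))
    = ext_obs q (minv (T \<mu>) * A \<mu> * T \<mu>) (C \<mu> * T \<mu>) * (minv (T \<mu>) * T \<nu>) *
      cols_of n I (\<lambda>i. kappa q (minv (T \<nu>) * A \<nu> * T \<nu>) (minv (T \<nu>) * B \<nu>) (C \<nu> * T \<nu>) (D \<nu>)
        u y (ks (i - 1)) (ks i))"
proof -
  let ?W = "ext_obs q (minv (T \<mu>) * A \<mu> * T \<mu>) (C \<mu> * T \<mu>)"
  let ?M = "minv (T \<mu>) * T \<nu>"
  let ?\<kappa> = "\<lambda>i. kappa q (minv (T \<nu>) * A \<nu> * T \<nu>) (minv (T \<nu>) * B \<nu>) (C \<nu> * T \<nu>) (D \<nu>)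
      u y (ks (i - 1)) (ks i)"
  note Tv = mode_data(2)[OF \<nu>] and Tm = mode_data(2)[OF \<mu>]
  note Sv = minv_is_inverse(1,2)[OF Tv mode_data(3)[OF \<nu>]]
  note Sm = minv_is_inverse(1)[OF Tm mode_data(3)[OF \<mu>]]
  note W = ext_obs_carrier[OF mult_carrier_mat[OF mode_data(4)[OF \<mu>] Tm], of q "minv (T \<mu>) * A \<mu> * T \<mu>"]
  have M: "?M \<in> carrier_mat n n" using Sm Tv by simp
  have x: "x (ks i) \<in> carrier_vec n" if "i \<in> I" for i
  proof -
    have "i \<le> istar" using that unfolding I_def trans_set_def by simp
    then have "ks i \<in> {1..N}" using switching_interval[of i] by simp
    then show ?thesis using x_dim by simp
  qed
  have \<kappa>: "?\<kappa> i = minv (T \<nu>) *\<^sub>v x (ks i)" if "i \<in> I" for i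
    using transition_estimates(1)[OF \<nu> \<mu>] that unfolding q_def I_def by simp
  have "stackv q p (zeta (minv (T \<mu>) * A \<mu> * T \<mu>) (minv (T \<mu>) * B \<mu>) (C \<mu> * T \<mu>) (D \<mu>) u y (ks i))
      (ks i) = (?W * ?M) *\<^sub>v ?\<kappa> i" if "i \<in> I" for i
  proof -
    have "?M *\<^sub>v ?\<kappa> i = minv (T \<mu>) *\<^sub>v (T \<nu> *\<^sub>v (minv (T \<nu>) *\<^sub>v x (ks i)))"
      using \<kappa>[OF that] Sv(1) Sm Tv x[OF that] by simp
    also have "T \<nu> *\<^sub>v (minv (T \<nu>) *\<^sub>v x (ks i)) = x (ks i)"
      using assoc_mult_mat_vec[OF Tv Sv(1) x[OF that]] Sv(2) x[OF that] by simp
    finally have "?M *\<^sub>v ?\<kappa> i = minv (T \<mu>) *\<^sub>v x (ks i)" .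
    then show ?thesis
      using transition_estimates(2)[OF \<nu> \<mu>] that W M \<kappa>[OF that] Sv(1) x[OF that]
      unfolding q_def I_def by simp
  qed
  then have "cols_of ((q + 1) * p) I (\<lambda>i. stackv q p
      (zeta (minv (T \<mu>) * A \<mu> * T \<mu>) (minv (T \<mu>) * B \<mu>) (C \<mu> * T \<mu>) (D \<mu>) u y (ks i)) (ks i))
    = cols_of ((q + 1) * p) I (\<lambda>i. (?W * ?M) *\<^sub>v ?\<kappa> i)"
    by (intro cols_of_cong) (simp_all add: I_def trans_set_def)
  also have "\<dots> = (?W * ?M) * cols_of n I ?\<kappa>"
    using W M \<kappa> Sv(1) x by (intro cols_of_mult) (auto simp: I_def trans_set_def)
  finally show ?thesis .
qed

lemma transition_recovery:
  assumes \<nu>: "\<nu> \<in> {1..\<sigma>}" and \<mu>: "\<mu> \<in> {1..\<sigma>}"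
  defines "q \<equiv> dwell_min ks istar - 1" and "I \<equiv> trans_set \<phi> ks istar \<nu> \<mu>"
    and "\<Psi> \<equiv> cols_of n (trans_set \<phi> ks istar \<nu> \<mu>) (\<lambda>i. kappa (dwell_min ks istar - 1)
      (minv (T \<nu>) * A \<nu> * T \<nu>) (minv (T \<nu>) * B \<nu>) (C \<nu> * T \<nu>) (D \<nu>) u y (ks (i - 1)) (ks i))"
  assumes rank_\<Psi>: "mrank \<Psi> = n"
  shows "minv (T \<mu>) * T \<nu> =
    pinv_left (ext_obs q (minv (T \<mu>) * A \<mu> * T \<mu>) (C \<mu> * T \<mu>)) *
    cols_of ((q + 1) * p) I (\<lambda>i. stackv q p
      (zeta (minv (T \<mu>) * A \<mu> * T \<mu>) (minv (T \<mu>) * B \<mu>) (C \<mu> * T \<mu>) (D \<mu>) u y (ks i)) (ks i)) *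
    pinv_right \<Psi>"
proof -
  note Tm = mode_data(2,3)[OF \<mu>]
  have W: "ext_obs q (minv (T \<mu>) * A \<mu> * T \<mu>) (C \<mu> * T \<mu>) \<in> carrier_mat ((q + 1) * p) n"
    using ext_obs_carrier mode_data(4)[OF \<mu>] Tm by simp
  have M: "minv (T \<mu>) * T \<nu> \<in> carrier_mat n n"
    using minv_is_inverse(1)[OF Tm] mode_data(2)[OF \<nu>] by simp
  have \<Psi>: "\<Psi> \<in> carrier_mat n (card I)" by (simp add: \<Psi>_def I_def cols_of_def)
  have "n \<le> q + 1" using dwell unfolding q_def by linarith
  note inj_W = inj_mat_ext_obs_estimate[OF mode_data(1)[OF \<mu>] Tm this]
  have "inj_mat \<Psi>\<^sup>T"
    using inj_mat_transpose_if_rank_eq_dim_row[OF \<Psi>] rank_\<Psi> \<Psi> unfolding mrank_def by simp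
  from pinv_left_mult_mult_pinv_right[OF W M \<Psi> inj_W this]
  show ?thesis using transition_data_factorization[OF \<nu> \<mu>] unfolding q_def I_def \<Psi>_def by simp
qed

end

theorem theorem1:
  fixes n m p \<sigma> N istar :: nat
    and \<phi> ks :: "nat \<Rightarrow> nat"
    and A B C D T Ah Bh Ch Dh :: "nat \<Rightarrow> real mat"
    and x u y :: "nat \<Rightarrow> real vec"
    and \<nu> \<mu> :: nat
  assumes n2: "n \<ge> 2"
    (* switching sequence: [1,N] \<rightarrow> {1..\<sigma>} surjective *)
    and phi_range: "\<forall>k\<in>{1..N}. \<phi> k \<in> {1..\<sigma>}"
    and phi_surj: "\<phi> ` {1..N} = {1..\<sigma>}"
    (* switching times k_0 = 1 < k_1 < ... < k_istar < k_(istar+1) = N *)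
    and ks0: "ks 0 = 1"
    and ksN: "ks (Suc istar) = N"
    and ks_mono: "\<forall>i\<le>istar. ks i < ks (Suc i)"
    and phi_const: "\<forall>i\<le>istar. \<forall>k\<in>{ks i..<ks (Suc i)}. \<phi> k = \<phi> (ks i)"
    and phi_switch: "\<forall>i\<in>{1..istar}. \<phi> (ks i) \<noteq> \<phi> (ks (i - 1))"
    (* standing assumptions on the modes *)
    and minimal: "\<forall>j\<in>{1..\<sigma>}. minimal_deg n m p (A j) (B j) (C j) (D j)"
    and A_inv: "\<forall>j\<in>{1..\<sigma>}. invertible_mat (A j)"
    and stable: "\<forall>j\<in>{1..\<sigma>}. bibo_stable (A j) (B j) (C j) (D j)"
    and dwell: "dwell_min ks istar \<ge> n"
    (* local estimates, similar via unknown nonsingular T_j *)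
    and T_carrier: "\<forall>j\<in>{1..\<sigma>}. T j \<in> carrier_mat n n"
    and T_inv: "\<forall>j\<in>{1..\<sigma>}. invertible_mat (T j)"
    and Ah_def: "\<forall>j\<in>{1..\<sigma>}. Ah j = minv (T j) * A j * T j"
    and Bh_def: "\<forall>j\<in>{1..\<sigma>}. Bh j = minv (T j) * B j"
    and Ch_def: "\<forall>j\<in>{1..\<sigma>}. Ch j = C j * T j"
    and Dh_def: "\<forall>j\<in>{1..\<sigma>}. Dh j = D j"
    (* the LSS trajectory *)
    and u_dim: "\<forall>k\<in>{1..N}. u k \<in> carrier_vec m"
    and x_dim: "\<forall>k\<in>{1..N}. x k \<in> carrier_vec n"
    and y_dim: "\<forall>k\<in>{1..N}. y k \<in> carrier_vec p"
    and state_eq: "\<forall>k\<in>{1..<N}. x (Suc k) = A (\<phi> k) *\<^sub>v x k + B (\<phi> k) *\<^sub>v u k"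
    and output_eq: "\<forall>k\<in>{1..N}. y k = C (\<phi> k) *\<^sub>v x k + D (\<phi> k) *\<^sub>v u k"
    (* the pair (nu, mu) *)
    and nu_mem: "\<nu> \<in> {1..\<sigma>}" and mu_mem: "\<mu> \<in> {1..\<sigma>}" and nu_mu: "\<nu> \<noteq> \<mu>"
    and N_ne: "trans_set \<phi> ks istar \<nu> \<mu> \<noteq> {}"
    and rank_Psi: "mrank (cols_of n (trans_set \<phi> ks istar \<nu> \<mu>)
        (\<lambda>i. kappa (dwell_min ks istar - 1) (Ah \<nu>) (Bh \<nu>) (Ch \<nu>) (Dh \<nu>) u y (ks (i - 1)) (ks i))) = n"
  shows "minv (T \<mu>) * T \<nu> =
     pinv_left (ext_obs (dwell_min ks istar - 1) (Ah \<mu>) (Ch \<mu>)) *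
     cols_of ((dwell_min ks istar - 1 + 1) * p) (trans_set \<phi> ks istar \<nu> \<mu>)
       (\<lambda>i. stackv (dwell_min ks istar - 1) p (zeta (Ah \<mu>) (Bh \<mu>) (Ch \<mu>) (Dh \<mu>) u y (ks i)) (ks i)) *
     pinv_right (cols_of n (trans_set \<phi> ks istar \<nu> \<mu>)
       (\<lambda>i. kappa (dwell_min ks istar - 1) (Ah \<nu>) (Bh \<nu>) (Ch \<nu>) (Dh \<nu>) u y (ks (i - 1)) (ks i)))"
proof -
  interpret switched_lss n m p \<sigma> N istar \<phi> ks A B C D T x u y
    using ks0 ksN ks_mono phi_const minimal dwell T_carrier T_inv u_dim x_dim state_eq output_eq
    by unfold_locales
  have hats: "Ah j = minv (T j) * A j * T j" "Bh j = minv (T j) * B j" "Ch j = C j * T j" "Dh j = D j"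
    if "j \<in> {1..\<sigma>}" for j
    using that Ah_def Bh_def Ch_def Dh_def by auto
  show ?thesis
    using transition_recovery[OF nu_mem mu_mem] rank_Psi
    unfolding hats[OF nu_mem] hats[OF mu_mem] by simp
qed

end
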